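(* Let $k$ be an algebraically closed field of characteristic $0$, let $K$ be a function field of dimension $2$ over $k$, and let $(R,\mathfrak m)$ be a $2$-dimensional regular local ring with fraction field $K$ and residue field $R/\mathfrak m\cong k$. Let $\nu$ be a non-divisorial valuation of $K$ (i.e. a valuation whose residue field has transcendence degree $0$ over $k$) centered on $R$, with value semigroup $S=\{\nu(x)\mid x\in\mathfrak m\setminus\{0\}\}$. Then for every $s\in S$, the length $l(s)=\dim_k\big(I_s/I_s^+\big)$ equals $1$, where $I_s=\{x\in R\mid \nu(x)\ge s\}$ and $I_s^+=\{x\in R\mid \nu(x)>s\}$.
   Context: A valuation $\nu$ of $K$ centered on $R$ has valuation ring $(V,\mathfrak m_V)$ with $R\subseteq V$, $\mathfrak m_V\cap R=\mathfrak m$. The divisorial valuations are those with rank $1$, rational rank $1$ and residue field $V/\mathfrak m_V$ of transcendence degree $1$ over $k$; by Abhyankar's inequality every other valuation centered on $R$ has residue field of transcendence degree $0$ over $k$, and these are called non-divisorial. The quotient $I_s/I_s^+$ is regarded as a vector space over $R/\mathfrak m\cong k$. *)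

theory Defs
  imports Main
begin

text \<open>Ambient field: a type 'a of class field_char_0 plays the role of the
function field K (so K = UNIV).  Subfields, subrings, ideals are sets.\<close>

definition subfield :: "'a::field set \<Rightarrow> bool" where
  "subfield F \<longleftrightarrow> 0 \<in> F \<and> 1 \<in> F \<and> (\<forall>x\<in>F. \<forall>y\<in>F. x + y \<in> F \<and> x * y \<in> F)
     \<and> (\<forall>x\<in>F. - x \<in> F \<and> inverse x \<in> F)"

definition subring :: "'a::field set \<Rightarrow> bool" where
  "subring R \<longleftrightarrow> 0 \<in> R \<and> 1 \<in> R \<and> (\<forall>x\<in>R. \<forall>y\<in>R. x + y \<in> R \<and> x * y \<in> R)
     \<and> (\<forall>x\<in>R. - x \<in> R)"

definition alg_closed_subfield :: "'a::field set \<Rightarrow> bool" where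
  "alg_closed_subfield k \<longleftrightarrow> subfield k \<and>
     (\<forall>n c. n \<ge> 1 \<and> (\<forall>i\<le>n. c i \<in> k) \<and> c n \<noteq> 0 \<longrightarrow>
        (\<exists>z\<in>k. (\<Sum>i\<le>n. c i * z ^ i) = 0))"

definition algebraic_over :: "'a::field set \<Rightarrow> 'a \<Rightarrow> bool" where
  "algebraic_over F z \<longleftrightarrow> (\<exists>n c. (\<forall>i\<le>n. c i \<in> F) \<and> c n \<noteq> 0 \<and> (\<Sum>i\<le>n. c i * z ^ i) = 0)"

definition alg_indep2 :: "'a::field set \<Rightarrow> 'a \<Rightarrow> 'a \<Rightarrow> bool" where
  "alg_indep2 k x y \<longleftrightarrow> (\<forall>n c. (\<forall>i<n. \<forall>j<n. c i j \<in> k) \<and>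
      (\<Sum>i<n. \<Sum>j<n. c i j * x ^ i * y ^ j) = 0 \<longrightarrow> (\<forall>i<n. \<forall>j<n. c i j = 0))"

definition gen_field :: "'a::field set \<Rightarrow> 'a set" where
  "gen_field S = \<Inter> {L. subfield L \<and> S \<subseteq> L}"

text \<open>K (= UNIV) is a function field of dimension 2 over k: finitely generated
field extension of k of transcendence degree 2 (i.e. with a transcendence basis
of two elements).\<close>
definition function_field_dim2 :: "'a::field set \<Rightarrow> bool" where
  "function_field_dim2 k \<longleftrightarrow> subfield k \<and>
     (\<exists>G. finite G \<and> gen_field (k \<union> G) = UNIV) \<and>
     (\<exists>x y. alg_indep2 k x y \<and> (\<forall>z. algebraic_over (gen_field (k \<union> {x, y})) z))"

definition ideal_in :: "'a::field set \<Rightarrow> 'a set \<Rightarrow> bool" where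
  "ideal_in R I \<longleftrightarrow> I \<subseteq> R \<and> 0 \<in> I \<and> (\<forall>x\<in>I. \<forall>y\<in>I. x + y \<in> I) \<and>
     (\<forall>r\<in>R. \<forall>x\<in>I. r * x \<in> I)"

definition prime_ideal_in :: "'a::field set \<Rightarrow> 'a set \<Rightarrow> bool" where
  "prime_ideal_in R P \<longleftrightarrow> ideal_in R P \<and> P \<noteq> R \<and>
     (\<forall>a\<in>R. \<forall>b\<in>R. a * b \<in> P \<longrightarrow> a \<in> P \<or> b \<in> P)"

definition ideal_gen :: "'a::field set \<Rightarrow> 'a set \<Rightarrow> 'a set" where
  "ideal_gen R G = {x. \<exists>r. (\<forall>g\<in>G. r g \<in> R) \<and> x = (\<Sum>g\<in>G. r g * g)}"

definition noetherian_ring :: "'a::field set \<Rightarrow> bool" where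
  "noetherian_ring R \<longleftrightarrow> (\<forall>I. ideal_in R I \<longrightarrow> (\<exists>G. finite G \<and> G \<subseteq> I \<and> I = ideal_gen R G))"

definition prime_chain :: "'a::field set \<Rightarrow> nat \<Rightarrow> (nat \<Rightarrow> 'a set) \<Rightarrow> bool" where
  "prime_chain R n P \<longleftrightarrow> (\<forall>i\<le>n. prime_ideal_in R (P i)) \<and> (\<forall>i<n. P i \<subset> P (Suc i))"

definition krull_dim_eq :: "'a::field set \<Rightarrow> nat \<Rightarrow> bool" where
  "krull_dim_eq R d \<longleftrightarrow> (\<exists>P. prime_chain R d P) \<and> (\<forall>n P. prime_chain R n P \<longrightarrow> n \<le> d)"

definition local_ring :: "'a::field set \<Rightarrow> 'a set \<Rightarrow> bool" where
  "local_ring R m \<longleftrightarrow> subring R \<and> ideal_in R m \<and> m \<noteq> R \<and>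
     (\<forall>x\<in>R - m. \<exists>y\<in>R. x * y = 1)"

definition regular_local_ring_dim2 :: "'a::field set \<Rightarrow> 'a set \<Rightarrow> bool" where
  "regular_local_ring_dim2 R m \<longleftrightarrow> local_ring R m \<and> noetherian_ring R \<and> krull_dim_eq R 2 \<and>
     (\<exists>a b. a \<in> m \<and> b \<in> m \<and> m = ideal_gen R {a, b})"

definition fraction_field_is_UNIV :: "'a::field set \<Rightarrow> bool" where
  "fraction_field_is_UNIV R \<longleftrightarrow> (\<forall>z. \<exists>a\<in>R. \<exists>b\<in>R. b \<noteq> 0 \<and> z = a / b)"

text \<open>Valuation on K with values in an ordered abelian group; the value at 0
(formally infinity) is irrelevant and never used.\<close>
definition valuation :: "('a::field \<Rightarrow> 'g::linordered_ab_group_add) \<Rightarrow> bool" where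
  "valuation \<nu> \<longleftrightarrow> (\<forall>x y. x \<noteq> 0 \<and> y \<noteq> 0 \<longrightarrow> \<nu> (x * y) = \<nu> x + \<nu> y) \<and>
     (\<forall>x y. x \<noteq> 0 \<and> y \<noteq> 0 \<and> x + y \<noteq> 0 \<longrightarrow> \<nu> (x + y) \<ge> min (\<nu> x) (\<nu> y))"

definition val_ring :: "('a::field \<Rightarrow> 'g::linordered_ab_group_add) \<Rightarrow> 'a set" where
  "val_ring \<nu> = {x. x = 0 \<or> \<nu> x \<ge> 0}"

definition val_max_ideal :: "('a::field \<Rightarrow> 'g::linordered_ab_group_add) \<Rightarrow> 'a set" where
  "val_max_ideal \<nu> = {x. x = 0 \<or> \<nu> x > 0}"

definition centered_on :: "('a::field \<Rightarrow> 'g::linordered_ab_group_add) \<Rightarrow> 'a set \<Rightarrow> 'a set \<Rightarrow> bool" where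
  "centered_on \<nu> R m \<longleftrightarrow> R \<subseteq> val_ring \<nu> \<and> val_max_ideal \<nu> \<inter> R = m"

text \<open>The residue field V/m_V has transcendence degree 0 over k, i.e. every
residue class is algebraic over (the image of) k.\<close>
definition residue_trdeg0 :: "('a::field \<Rightarrow> 'g::linordered_ab_group_add) \<Rightarrow> 'a set \<Rightarrow> bool" where
  "residue_trdeg0 \<nu> k \<longleftrightarrow> (\<forall>v\<in>val_ring \<nu>. \<exists>n c. (\<forall>i\<le>n. c i \<in> k) \<and> c n \<notin> val_max_ideal \<nu> \<and>
       (\<Sum>i\<le>n. c i * v ^ i) \<in> val_max_ideal \<nu>)"

definition value_semigroup :: "('a::field \<Rightarrow> 'g::linordered_ab_group_add) \<Rightarrow> 'a set \<Rightarrow> 'g set" where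
  "value_semigroup \<nu> m = {\<nu> x | x. x \<in> m \<and> x \<noteq> 0}"

definition I_ge :: "('a::field \<Rightarrow> 'g::linordered_ab_group_add) \<Rightarrow> 'a set \<Rightarrow> 'g \<Rightarrow> 'a set" where
  "I_ge \<nu> R s = {x\<in>R. x = 0 \<or> \<nu> x \<ge> s}"

definition I_gt :: "('a::field \<Rightarrow> 'g::linordered_ab_group_add) \<Rightarrow> 'a set \<Rightarrow> 'g \<Rightarrow> 'a set" where
  "I_gt \<nu> R s = {x\<in>R. x = 0 \<or> \<nu> x > s}"

text \<open>dim_k (A/B) = n for k-subspaces B \<subseteq> A: there is a list of n elements of A
whose classes form a k-basis of A/B.\<close>
definition quotient_dim_eq :: "'a::field set \<Rightarrow> 'a set \<Rightarrow> 'a set \<Rightarrow> nat \<Rightarrow> bool" where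
  "quotient_dim_eq k A B n \<longleftrightarrow> (\<exists>bs. length bs = n \<and> set bs \<subseteq> A \<and>
     (\<forall>c. (\<forall>i<n. c i \<in> k) \<and> (\<Sum>i<n. c i * bs ! i) \<in> B \<longrightarrow> (\<forall>i<n. c i = 0)) \<and>
     (\<forall>a\<in>A. \<exists>c. (\<forall>i<n. c i \<in> k) \<and> a - (\<Sum>i<n. c i * bs ! i) \<in> B))"

end

theory Submission
  imports Defs "HOL-Computational_Algebra.Polynomial"
begin

text \<open>Fix x with \<nu>(x) = s. Any a with \<nu>(a) = s gives a unit a/x of the valuation
ring; since the residue field is algebraic over the algebraically closed field k,
the residue of a/x is that of some z \<in> k, so \<nu>(a - z x) > s. Hence the class of x
spans I_s/I_s^+, and it is nonzero because \<nu>(c x) = s for every nonzero c \<in> k.\<close>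

lemma subfield_imp_subring: "subfield k \<Longrightarrow> subring k"
  by (simp add: subfield_def subring_def)

lemma poly_in_subring:
  assumes "subring V" "v \<in> V" "\<forall>i. coeff p i \<in> V"
  shows "poly p v \<in> V"
  using assms(3)
proof (induction p rule: pCons_induct)
  case 0
  then show ?case using assms(1) by (simp add: subring_def)
next
  case (pCons a p)
  have "a \<in> V" "\<forall>i. coeff p i \<in> V"
    using pCons.prems by (metis coeff_pCons_0, metis coeff_pCons_Suc)
  with pCons.IH show ?case using assms(1,2) by (simp add: subring_def)
qed

lemma synthetic_div_in_subring:
  assumes "subring V" "z \<in> V" "\<forall>i. coeff p i \<in> V"
  shows "\<forall>i. coeff (synthetic_div p z) i \<in> V"
  using assms(3)
proof (induction p rule: pCons_induct)
  case 0
  then show ?case using assms(1) by (simp add: subring_def)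
next
  case (pCons a p)
  have p: "\<forall>i. coeff p i \<in> V" using pCons.prems by (metis coeff_pCons_Suc)
  have "poly p z \<in> V" using poly_in_subring[OF assms(1,2) p] .
  with pCons.IH p show ?case
    by (simp add: coeff_pCons split: nat.split)
qed

lemma valuation_mult:
  "valuation \<nu> \<Longrightarrow> x \<noteq> 0 \<Longrightarrow> y \<noteq> 0 \<Longrightarrow> \<nu> (x * y) = \<nu> x + \<nu> y"
  by (simp add: valuation_def)

lemma valuation_one: "valuation \<nu> \<Longrightarrow> \<nu> 1 = 0"
  using valuation_mult[of \<nu> 1 1] by simp

lemma self_add_eq_0_iff: "(a::'g::linordered_ab_group_add) + a = 0 \<longleftrightarrow> a = 0"
  by (metis add_neg_neg add_pos_pos less_irrefl add_0 linorder_neqE)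

lemma valuation_minus_one: "valuation \<nu> \<Longrightarrow> \<nu> (- 1) = 0"
  using valuation_mult[of \<nu> "- 1" "- 1"] valuation_one[of \<nu>]
  by (simp add: self_add_eq_0_iff)

lemma valuation_uminus: "valuation \<nu> \<Longrightarrow> x \<noteq> 0 \<Longrightarrow> \<nu> (- x) = \<nu> x"
  using valuation_mult[of \<nu> "- 1" x] valuation_minus_one[of \<nu>] by simp

lemma valuation_add_ge_min:
  "valuation \<nu> \<Longrightarrow> x \<noteq> 0 \<Longrightarrow> y \<noteq> 0 \<Longrightarrow> x + y \<noteq> 0 \<Longrightarrow> min (\<nu> x) (\<nu> y) \<le> \<nu> (x + y)"
  by (simp add: valuation_def)

lemma subring_val_ring:
  assumes val: "valuation \<nu>"
  shows "subring (val_ring \<nu>)"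
proof -
  have "x + y \<in> val_ring \<nu>" if "x \<in> val_ring \<nu>" "y \<in> val_ring \<nu>" for x y
    using that valuation_add_ge_min[OF val, of x y]
    by (cases "x = 0 \<or> y = 0 \<or> x + y = 0") (auto simp: val_ring_def min_def split: if_splits)
  moreover have "x * y \<in> val_ring \<nu>" if "x \<in> val_ring \<nu>" "y \<in> val_ring \<nu>" for x y
    using that valuation_mult[OF val, of x y] by (cases "x = 0 \<or> y = 0") (auto simp: val_ring_def)
  moreover have "- x \<in> val_ring \<nu>" if "x \<in> val_ring \<nu>" for x
    using that valuation_uminus[OF val, of x] by (cases "x = 0") (auto simp: val_ring_def)
  moreover have "0 \<in> val_ring \<nu>" "1 \<in> val_ring \<nu>"
    using valuation_one[OF val] by (simp_all add: val_ring_def)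
  ultimately show ?thesis unfolding subring_def by blast
qed

lemma val_max_ideal_prime:
  assumes "valuation \<nu>" "x \<in> val_ring \<nu>" "y \<in> val_ring \<nu>" "x * y \<in> val_max_ideal \<nu>"
  shows "x \<in> val_max_ideal \<nu> \<or> y \<in> val_max_ideal \<nu>"
  using assms valuation_mult[OF assms(1), of x y]
  by (cases "x = 0 \<or> y = 0") (auto simp: val_ring_def val_max_ideal_def)

lemma valuation_eq_0_if_inverse_in_val_ring:
  assumes "valuation \<nu>" "c \<noteq> 0" "c \<in> val_ring \<nu>" "inverse c \<in> val_ring \<nu>"
  shows "\<nu> c = 0"
proof -
  have "\<nu> c + \<nu> (inverse c) = 0"
    using valuation_mult[OF assms(1,2), of "inverse c"] valuation_one[OF assms(1)] assms(2) by simp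
  with assms(2-4) show ?thesis by (auto simp: val_ring_def add_nonneg_eq_0_iff)
qed

lemma valuation_subfield_eq_0:
  assumes "valuation \<nu>" "subfield k" "k \<subseteq> val_ring \<nu>" "c \<in> k" "c \<noteq> 0"
  shows "\<nu> c = 0"
  using assms valuation_eq_0_if_inverse_in_val_ring[of \<nu> c] by (auto simp: subfield_def)

lemma residue_root_in_alg_closed_subfield:
  assumes val: "valuation \<nu>" and ac: "alg_closed_subfield k" and kV: "k \<subseteq> val_ring \<nu>"
    and v: "v \<in> val_ring \<nu>"
  shows "\<forall>i. coeff p i \<in> k \<Longrightarrow> p \<noteq> 0 \<Longrightarrow> poly p v \<in> val_max_ideal \<nu> \<Longrightarrow>
    \<exists>z\<in>k. v - z \<in> val_max_ideal \<nu>"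
proof (induction "degree p" arbitrary: p rule: less_induct)
  case less
  have sk: "subfield k" using ac by (simp add: alg_closed_subfield_def)
  show ?case
  proof (cases "degree p = 0")
    case True
    then obtain c where p: "p = [:c:]" by (metis degree_eq_zeroE)
    have "c \<in> k" "c \<noteq> 0" using less.prems p by (metis coeff_pCons_0, simp)
    then show ?thesis
      using less.prems p valuation_subfield_eq_0[OF val sk kV] by (simp add: val_max_ideal_def)
  next
    case False
    have "\<exists>z\<in>k. (\<Sum>i\<le>degree p. coeff p i * z ^ i) = 0"
      using ac False less.prems unfolding alg_closed_subfield_def by auto
    then obtain z where z: "z \<in> k" "poly p z = 0" by (auto simp: poly_altdef)
    define q where "q = synthetic_div p z"
    have pq: "p = [:-z, 1:] * q"
      using synthetic_div_correct'[of z p] z(2) by (simp add: q_def)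
    then have "q \<noteq> 0" using less.prems by auto
    have pv: "poly p v = (v - z) * poly q v" by (subst pq) (simp add: algebra_simps)
    have q: "\<forall>i. coeff q i \<in> k"
      using synthetic_div_in_subring[OF subfield_imp_subring[OF sk] z(1)] less.prems q_def by blast
    have "degree q < degree p" using False degree_synthetic_div[of p z] by (simp add: q_def)
    have V: "subring (val_ring \<nu>)" using subring_val_ring[OF val] .
    have "v - z \<in> val_ring \<nu>"
      using V v kV z(1) unfolding subring_def by (metis diff_conv_add_uminus subsetD)
    moreover have "poly q v \<in> val_ring \<nu>" using poly_in_subring[OF V v] q kV by blast
    ultimately have "v - z \<in> val_max_ideal \<nu> \<or> poly q v \<in> val_max_ideal \<nu>"
      using val_max_ideal_prime[OF val] less.prems(3) pv by metis
    then show ?thesis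
      using z(1) less.hyps[OF \<open>degree q < degree p\<close> q \<open>q \<noteq> 0\<close>] by blast
  qed
qed

lemma residue_in_alg_closed_subfield:
  assumes val: "valuation \<nu>" and ac: "alg_closed_subfield k" and kV: "k \<subseteq> val_ring \<nu>"
    and trdeg0: "residue_trdeg0 \<nu> k" and v: "v \<in> val_ring \<nu>"
  shows "\<exists>z\<in>k. v - z \<in> val_max_ideal \<nu>"
proof -
  obtain n c where c: "\<forall>i\<le>n. c i \<in> k" "c n \<notin> val_max_ideal \<nu>"
    and root: "(\<Sum>i\<le>n. c i * v ^ i) \<in> val_max_ideal \<nu>"
    using trdeg0 v unfolding residue_trdeg0_def by blast
  define p where "p = (\<Sum>i\<le>n. monom (c i) i)"
  have coeff_p: "coeff p j = (if j \<le> n then c j else 0)" for j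
    by (simp add: p_def coeff_sum coeff_monom)
  have "0 \<in> k" using ac by (simp add: alg_closed_subfield_def subfield_def)
  then have "\<forall>i. coeff p i \<in> k" using c(1) coeff_p by simp
  moreover have "p \<noteq> 0" using c(2) coeff_p[of n] by (auto simp: val_max_ideal_def)
  moreover have "poly p v \<in> val_max_ideal \<nu>" using root by (simp add: p_def poly_sum poly_monom)
  ultimately show ?thesis using residue_root_in_alg_closed_subfield[OF val ac kV v] by blast
qed

lemma valuation_residue_approximation:
  assumes val: "valuation \<nu>" and ac: "alg_closed_subfield k" and kV: "k \<subseteq> val_ring \<nu>"
    and trdeg0: "residue_trdeg0 \<nu> k" and "x \<noteq> 0" "a \<noteq> 0" "\<nu> a = \<nu> x"
  shows "\<exists>z\<in>k. a - z * x = 0 \<or> \<nu> x < \<nu> (a - z * x)"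
proof -
  have "a / x \<noteq> 0" using assms(5,6) by simp
  then have "\<nu> a = \<nu> (a / x) + \<nu> x"
    using valuation_mult[OF val _ assms(5), of "a / x"] assms(5) by simp
  then have "a / x \<in> val_ring \<nu>" using assms(7) by (simp add: val_ring_def)
  then obtain z where "z \<in> k" and z: "a / x - z \<in> val_max_ideal \<nu>"
    using residue_in_alg_closed_subfield[OF val ac kV trdeg0] by blast
  have "a - z * x = x * (a / x - z)" using assms(5) by (simp add: algebra_simps)
  moreover have "a / x - z = 0 \<or> 0 < \<nu> (a / x - z)" using z by (simp add: val_max_ideal_def)
  ultimately have "a - z * x = 0 \<or> \<nu> x < \<nu> (a - z * x)"
    using valuation_mult[OF val assms(5), of "a / x - z"] by (cases "a / x - z = 0") auto
  with \<open>z \<in> k\<close> show ?thesis by blast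
qed

lemma quotient_dim_eq_1I:
  assumes "b \<in> A" "\<And>c. c \<in> k \<Longrightarrow> c * b \<in> B \<Longrightarrow> c = 0" "\<And>a. a \<in> A \<Longrightarrow> \<exists>c\<in>k. a - c * b \<in> B"
  shows "quotient_dim_eq k A B 1"
  unfolding quotient_dim_eq_def
proof (intro exI[of _ "[b]"] conjI allI impI ballI)
  fix c and i :: nat assume "(\<forall>i<1. c i \<in> k) \<and> (\<Sum>i<1. c i * [b] ! i) \<in> B" "i < 1"
  then show "c i = 0" using assms(2)[of "c 0"] by simp
next
  fix a assume "a \<in> A"
  then obtain c where "c \<in> k" "a - c * b \<in> B" using assms(3) by blast
  then show "\<exists>c. (\<forall>i<1. c i \<in> k) \<and> a - (\<Sum>i<1. c i * [b] ! i) \<in> B"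
    by (intro exI[of _ "\<lambda>_. c"]) simp
qed (use assms(1) in simp_all)

theorem mainTheorem1:
  fixes k R m :: "'a::field_char_0 set"
    and \<nu> :: "'a \<Rightarrow> 'g::linordered_ab_group_add"
    and s :: 'g
  assumes k_alg_closed: "alg_closed_subfield k"
    and K_function_field: "function_field_dim2 k"
    and R_regular: "regular_local_ring_dim2 R m"
    and R_frac: "fraction_field_is_UNIV R"
    and k_in_R: "k \<subseteq> R"
    and residue_k: "\<forall>x\<in>R. \<exists>c\<in>k. x - c \<in> m"
    and nu_val: "valuation \<nu>"
    and nu_centered: "centered_on \<nu> R m"
    and nu_nondivisorial: "residue_trdeg0 \<nu> k"
    and s_in_S: "s \<in> value_semigroup \<nu> m"
  shows "quotient_dim_eq k (I_ge \<nu> R s) (I_gt \<nu> R s) 1"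
proof -
  have sk: "subfield k" using k_alg_closed by (simp add: alg_closed_subfield_def)
  have R: "subring R" "m \<subseteq> R"
    using R_regular by (auto simp: regular_local_ring_dim2_def local_ring_def ideal_in_def)
  have kV: "k \<subseteq> val_ring \<nu>" using k_in_R nu_centered by (auto simp: centered_on_def)
  obtain x where x: "x \<in> R" "x \<noteq> 0" "\<nu> x = s"
    using s_in_S R(2) by (auto simp: value_semigroup_def)
  show ?thesis
  proof (rule quotient_dim_eq_1I)
    show "x \<in> I_ge \<nu> R s" using x by (simp add: I_ge_def)
  next
    fix c assume "c \<in> k" "c * x \<in> I_gt \<nu> R s"
    then show "c = 0"
      using valuation_mult[OF nu_val _ x(2), of c] valuation_subfield_eq_0[OF nu_val sk kV]
      by (cases "c = 0") (auto simp: I_gt_def x(2,3))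
  next
    fix a assume a: "a \<in> I_ge \<nu> R s"
    show "\<exists>c\<in>k. a - c * x \<in> I_gt \<nu> R s"
    proof (cases "a \<in> I_gt \<nu> R s")
      case True
      then show ?thesis using sk by (intro bexI[of _ 0]) (simp_all add: subfield_def)
    next
      case False
      then have "a \<noteq> 0" "\<nu> a = \<nu> x" using a x(3) by (auto simp: I_ge_def I_gt_def)
      then obtain z where "z \<in> k" and z: "a - z * x = 0 \<or> s < \<nu> (a - z * x)"
        using valuation_residue_approximation[OF nu_val k_alg_closed kV nu_nondivisorial x(2)] x(3)
        by blast
      moreover have "a - z * x \<in> R"
        using R(1) a x(1) \<open>z \<in> k\<close> k_in_R unfolding subring_def I_ge_def
        by (metis (no_types, lifting) diff_conv_add_uminus mem_Collect_eq subsetD)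
      ultimately show ?thesis by (auto simp: I_gt_def)
    qed
  qed
qed

end
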